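(* Let $\mathtt{a}\in\Sigma$ and $p,q,k\in\mathbb{N}$ with $p,q,k\ge 1$. If $\mathtt{a}^p\equiv_{k+3}\mathtt{a}^q$, then $w^p\equiv_k w^q$ for every primitive word $w\in\Sigma^+$.
   Context: $\Sigma$ is a fixed finite alphabet. A word $w\in\Sigma^+$ is primitive if there is no $z\in\Sigma^*$ and $k>1$ with $w=z^k$. For $w \in \Sigma^*$, $\mathsf{Facs}(w)$ is the set of all factors (contiguous subwords, including $\varepsilon$ and $w$) of $w$. The structure $\mathfrak{A}_w$ representing $w$ has universe $\mathsf{Facs}(w)\cup\{\perp\}$, a ternary relation $R_\circ=\{(x,y,z)\in\mathsf{Facs}(w)^3 : x=y\cdot z\}$, for each letter $\mathtt{a}\in\Sigma$ a constant interpreted as $\mathtt{a}$ if $\mathtt{a}$ occurs in $w$ and as $\perp$ otherwise, and a constant $\varepsilon$ interpreted as the empty word. The $k$-round Ehrenfeucht–Fraïssé game on $\mathfrak{A}_w,\mathfrak{A}_v$: in each round $i$, Spoiler picks one of the two structures and an element of its universe, Duplicator answers with an element of the other structure's universe; let $a_i$ (in $\mathfrak{A}_w$) and $b_i$ (in $\mathfrak{A}_v$) be the chosen elements. Duplicator wins if the tuples $(a_1,\dots,a_k,\vec c^{\,\mathfrak{A}_w})$ and $(b_1,\dots,b_k,\vec c^{\,\mathfrak{A}_v})$, where $\vec c$ lists the interpretations of all constants, form a partial isomorphism: for all indices $i,j,l$, $a_i$ equals the interpretation of a constant $c$ iff $b_i$ equals the interpretation of $c$; $a_i=a_j$ iff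 $b_i=b_j$; and $a_i=a_j\cdot a_l$ iff $b_i=b_j\cdot b_l$. We write $w\equiv_k v$ if Duplicator has a winning strategy in the $k$-round game. *)

theory Defs
  imports Main "HOL-Library.Sublist"
begin

text \<open>Words over the alphabet (the finite type 'a) are lists. Elements of the
structure A_w are 'a list option: Some u for a factor u of w, None for bottom.\<close>

definition primitive :: "'a list \<Rightarrow> bool" where
  "primitive w \<longleftrightarrow> w \<noteq> [] \<and> \<not> (\<exists>z k. k > 1 \<and> w = concat (replicate k z))"

definition wpow :: "'a list \<Rightarrow> nat \<Rightarrow> 'a list" where
  "wpow w n = concat (replicate n w)"

definition Facs :: "'a list \<Rightarrow> 'a list set" where
  "Facs w = {u. sublist u w}"

definition univ :: "'a list \<Rightarrow> 'a list option set" where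
  "univ w = Some ` Facs w \<union> {None}"

text \<open>Constants: None stands for the constant epsilon, Some a for the letter a.\<close>
definition cinterp :: "'a list \<Rightarrow> 'a option \<Rightarrow> 'a list option" where
  "cinterp w c = (case c of None \<Rightarrow> Some []
                   | Some a \<Rightarrow> (if a \<in> set w then Some [a] else None))"

definition ext :: "'a list \<Rightarrow> 'a list option list \<Rightarrow> (nat + 'a option) \<Rightarrow> 'a list option" where
  "ext w xs idx = (case idx of Inl i \<Rightarrow> xs ! i | Inr c \<Rightarrow> cinterp w c)"

definition idxs :: "nat \<Rightarrow> (nat + 'a option) set" where
  "idxs n = Inl ` {..<n} \<union> range Inr"

definition concat_rel :: "'a list option \<Rightarrow> 'a list option \<Rightarrow> 'a list option \<Rightarrow> bool" where
  "concat_rel x y z \<longleftrightarrow> (\<exists>x' y' z'. x = Some x' \<and> y = Some y' \<and> z = Some z' \<and> x' = y' @ z')"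

definition partial_iso :: "'a list \<Rightarrow> 'a list \<Rightarrow> 'a list option list \<Rightarrow> 'a list option list \<Rightarrow> bool" where
  "partial_iso w v xs ys \<longleftrightarrow> length xs = length ys \<and>
     (\<forall>i \<in> idxs (length xs). \<forall>j \<in> idxs (length xs). \<forall>l \<in> idxs (length xs).
        (ext w xs i = ext w xs j \<longleftrightarrow> ext v ys i = ext v ys j) \<and>
        (concat_rel (ext w xs i) (ext w xs j) (ext w xs l) \<longleftrightarrow>
         concat_rel (ext v ys i) (ext v ys j) (ext v ys l)))"

fun dup_wins :: "nat \<Rightarrow> 'a list \<Rightarrow> 'a list \<Rightarrow> 'a list option list \<Rightarrow> 'a list option list \<Rightarrow> bool" where
  "dup_wins 0 w v xs ys = partial_iso w v xs ys"
| "dup_wins (Suc n) w v xs ys =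
     ((\<forall>x \<in> univ w. \<exists>y \<in> univ v. dup_wins n w v (xs @ [x]) (ys @ [y])) \<and>
      (\<forall>y \<in> univ v. \<exists>x \<in> univ w. dup_wins n w v (xs @ [x]) (ys @ [y])))"

definition ef_equiv :: "nat \<Rightarrow> 'a list \<Rightarrow> 'a list \<Rightarrow> bool" where
  "ef_equiv k w v \<longleftrightarrow> dup_wins k w v [] []"

end

theory Submission
  imports Defs
begin

text \<open>Duplicator transfers her strategy from \<open>a\<^sup>p, a\<^sup>q\<close> to \<open>w\<^sup>p, w\<^sup>q\<close>. A factor of \<open>w\<^sup>p\<close> is coded by
  where it sits in a block of \<open>M\<close> consecutive copies of \<open>w\<close> (least starting offset \<open>i < |w|\<close>, overhang
  \<open>g < |w|\<close>) together with the power \<open>a\<^sup>M\<close>; a move \<open>a\<^sup>M'\<close> of the unary game is decoded with the same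
  \<open>(i, g)\<close>. Equality of factors becomes equality of the powers. A concatenation \<open>u = v v'\<close> becomes a
  length equation \<open>M = M\<^sub>v + M\<^sub>v' + c\<close> with \<open>-3 \<le> c \<le> 1\<close>, together with agreement of pieces of \<open>w\<^sup>\<omega>\<close>
  that only depend on \<open>min M 3\<close>. Both survive in the unary game given three spare rounds: \<open>\<epsilon>\<close>, \<open>a\<close>,
  \<open>aa\<close> are definable, and Spoiler can reduce \<open>|x| = |y| + |z| + c\<close> to \<open>c = 0\<close> by lengthening or
  shortening \<open>y\<close> one letter at a time.\<close>

definition cyc_factor :: "'a list \<Rightarrow> nat \<Rightarrow> nat \<Rightarrow> 'a list" where
  "cyc_factor w i L = map (\<lambda>k. w ! ((i + k) mod length w)) [0..<L]"

lemma length_cyc_factor [simp]: "length (cyc_factor w i L) = L"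
  by (simp add: cyc_factor_def)

lemma nth_cyc_factor: "k < L \<Longrightarrow> cyc_factor w i L ! k = w ! ((i + k) mod length w)"
  by (simp add: cyc_factor_def)

lemma cyc_factor_eq_iff:
  "cyc_factor w i L = cyc_factor w j L \<longleftrightarrow> (\<forall>k<L. w ! ((i + k) mod length w) = w ! ((j + k) mod length w))"
  by (auto simp: list_eq_iff_nth_eq nth_cyc_factor)

lemma cyc_factor_add: "cyc_factor w i (L + L') = cyc_factor w i L @ cyc_factor w (i + L) L'"
  by (rule nth_equalityI) (auto simp: nth_cyc_factor nth_append add.assoc)

lemma cyc_factor_mod: "cyc_factor w (i mod length w) L = cyc_factor w i L"
  by (simp add: cyc_factor_def mod_add_left_eq)

lemma cyc_factor_add_mult: "cyc_factor w (i + k * length w) L = cyc_factor w i L"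
  by (metis cyc_factor_mod mod_mult_self1)

lemma cyc_factor_one: "i < length w \<Longrightarrow> cyc_factor w i (Suc 0) = [w ! i]"
  by (simp add: cyc_factor_def)

lemma cyc_factor_eq_take:
  "cyc_factor w i L = cyc_factor w j L \<Longrightarrow> L' \<le> L \<Longrightarrow> cyc_factor w i L' = cyc_factor w j L'"
  by (auto simp: cyc_factor_eq_iff)

lemma cyc_factor_eq_extend:
  assumes "w \<noteq> []" "cyc_factor w i L = cyc_factor w j L" "length w \<le> L"
  shows "cyc_factor w i L' = cyc_factor w j L'"
  unfolding cyc_factor_eq_iff
proof (intro allI impI)
  let ?n = "length w"
  fix k
  have "\<forall>k<?n. w ! ((i + k) mod ?n) = w ! ((j + k) mod ?n)"
    using assms(2,3) by (auto simp: cyc_factor_eq_iff)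
  then have "w ! ((i + k mod ?n) mod ?n) = w ! ((j + k mod ?n) mod ?n)"
    using assms(1) by simp
  then show "w ! ((i + k) mod ?n) = w ! ((j + k) mod ?n)"
    by (simp add: mod_add_right_eq)
qed

lemma cyc_factor_eq_iff_min:
  assumes "w \<noteq> []"
  shows "cyc_factor w i L = cyc_factor w j L \<longleftrightarrow>
    cyc_factor w i (min L (length w)) = cyc_factor w j (min L (length w))"
  using cyc_factor_eq_take cyc_factor_eq_extend[OF assms] by (metis min.cobounded1 min_def)

lemma cyc_factor_eq_append_iff:
  assumes "w \<noteq> []"
  shows "cyc_factor w i L = cyc_factor w j LJ @ cyc_factor w l LK \<longleftrightarrow>
    L = LJ + LK \<and>
    cyc_factor w i (min LJ (length w)) = cyc_factor w j (min LJ (length w)) \<and>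
    cyc_factor w (i + LJ) (min LK (length w)) = cyc_factor w l (min LK (length w))"
proof (cases "L = LJ + LK")
  case True
  then have "cyc_factor w i L = cyc_factor w i LJ @ cyc_factor w (i + LJ) LK"
    by (simp add: cyc_factor_add)
  then show ?thesis using True cyc_factor_eq_iff_min[OF assms] by simp
qed (metis length_cyc_factor length_append)

lemma length_wpow [simp]: "length (wpow w M) = M * length w"
  by (simp add: wpow_def length_concat sum_list_replicate)

lemma nth_wpow: "x < M * length w \<Longrightarrow> wpow w M ! x = w ! (x mod length w)"
proof (induction M arbitrary: x)
  case (Suc M)
  have "wpow w (Suc M) = w @ wpow w M" by (simp add: wpow_def)
  with Suc show ?case
    by (cases "x < length w") (simp_all add: nth_append mod_if le_mod_geq)
qed simp

lemma set_wpow: "1 \<le> p \<Longrightarrow> set (wpow w p) = set w"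
  by (cases p) (auto simp: wpow_def)

lemma sublist_wpow_cyc_factor:
  assumes "i + L \<le> M * length w"
  shows "sublist (cyc_factor w i L) (wpow w M)"
proof -
  have "cyc_factor w i L = take L (drop i (wpow w M))"
    using assms by (auto simp: list_eq_iff_nth_eq nth_cyc_factor nth_wpow)
  then show ?thesis by (metis sublist_drop sublist_order.dual_order.trans sublist_take)
qed

lemma sublist_wpow_obtain_cyc_factor:
  assumes "sublist u (wpow w p)"
  obtains s where "s + length u \<le> p * length w" "u = cyc_factor w s (length u)"
proof -
  obtain ps ss where e: "wpow w p = ps @ u @ ss" using assms by (auto simp: sublist_def)
  have len: "length ps + length u \<le> p * length w" using arg_cong[OF e, of length] by simp
  have "u = cyc_factor w (length ps) (length u)"
  proof (rule nth_equalityI)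
    fix k assume k: "k < length u"
    have "u ! k = wpow w p ! (length ps + k)" by (simp add: e nth_append k)
    also have "\<dots> = w ! ((length ps + k) mod length w)"
      using len k by (intro nth_wpow) simp
    finally show "u ! k = cyc_factor w (length ps) (length u) ! k" using k by (simp add: nth_cyc_factor)
  qed simp
  with len that show ?thesis by blast
qed

text \<open>Taking \<open>i\<close> least among the offsets at which \<open>u\<close> occurs in \<open>w\<^sup>\<omega>\<close> makes the code unique.\<close>

definition code_len :: "'a list \<Rightarrow> nat \<Rightarrow> nat \<Rightarrow> nat \<Rightarrow> nat" where
  "code_len w i g M = M * length w - i - g"

definition canonical :: "'a list \<Rightarrow> nat \<Rightarrow> nat \<Rightarrow> nat \<Rightarrow> bool" where
  "canonical w i g M \<longleftrightarrow> i < length w \<and> g < length w \<and> i + g \<le> M * length w \<and>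
     (\<forall>i'<i. cyc_factor w i' (code_len w i g M) \<noteq> cyc_factor w i (code_len w i g M))"

lemma sublist_wpow_canonical:
  assumes "w \<noteq> []" "sublist u (wpow w p)"
  obtains i g M where "canonical w i g M" "M \<le> p" "u = cyc_factor w i (code_len w i g M)"
proof -
  let ?n = "length w" and ?L = "length u"
  have n: "?n > 0" using assms by simp
  obtain s where s: "s + ?L \<le> p * ?n" "u = cyc_factor w s ?L"
    using assms(2) by (rule sublist_wpow_obtain_cyc_factor)
  let ?r = "s mod ?n"
  have ur: "cyc_factor w ?r ?L = u" using s by (simp add: cyc_factor_mod)
  define i where "i = (LEAST i. cyc_factor w i ?L = u)"
  have fi: "cyc_factor w i ?L = u" unfolding i_def by (rule LeastI[of _ ?r]) (rule ur)
  have ir: "i \<le> ?r" unfolding i_def by (rule Least_le) (rule ur)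
  have least: "\<forall>i'<i. cyc_factor w i' ?L \<noteq> u" unfolding i_def using not_less_Least by blast
  define M where "M = (i + ?L + ?n - 1) div ?n" \<comment> \<open>the ceiling of \<open>(i + |u|) / |w|\<close>\<close>
  have d: "i + ?L + ?n - 1 = M * ?n + (i + ?L + ?n - 1) mod ?n" unfolding M_def by simp
  have "(i + ?L + ?n - 1) mod ?n < ?n" using n by simp
  with d have ge: "i + ?L \<le> M * ?n" by linarith
  have le: "M * ?n \<le> i + ?L + ?n - 1" using d by linarith
  have "?r + ?L \<le> p * ?n" using s(1) div_mult_mod_eq[of s ?n] by linarith
  then have "M * ?n < p * ?n + ?n" using le ir n by linarith
  then have "M * ?n < (p + 1) * ?n" by simp
  then have Mp: "M \<le> p" by (metis Suc_eq_plus1 less_Suc_eq_le mult_less_cancel2)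
  define g where "g = M * ?n - (i + ?L)"
  have L: "code_len w i g M = ?L" using ge unfolding g_def code_len_def by simp
  have "i < ?n" using ir n by (meson mod_less_divisor order.strict_trans1)
  moreover have "g < ?n" using le ge n unfolding g_def by linarith
  ultimately have "canonical w i g M"
    unfolding canonical_def L using ge least fi unfolding g_def by auto
  with Mp L fi that show ?thesis by metis
qed

lemma canonical_inj:
  assumes c1: "canonical w i1 g1 M1" and c2: "canonical w i2 g2 M2"
    and e: "cyc_factor w i1 (code_len w i1 g1 M1) = cyc_factor w i2 (code_len w i2 g2 M2)"
  shows "i1 = i2 \<and> g1 = g2 \<and> M1 = M2"
proof -
  let ?n = "length w"
  have bounds: "g1 < ?n" "g2 < ?n" "i1 + g1 \<le> M1 * ?n" "i2 + g2 \<le> M2 * ?n"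
    using c1 c2 unfolding canonical_def by simp_all
  have L: "code_len w i1 g1 M1 = code_len w i2 g2 M2" using arg_cong[OF e, of length] by simp
  have i: "i1 = i2"
  proof (rule linorder_cases[of i1 i2])
    assume "i1 < i2"
    then show ?thesis using c2 e[unfolded L] unfolding canonical_def by blast
  next
    assume "i2 < i1"
    then show ?thesis using c1 e[unfolded L[symmetric]] unfolding canonical_def by metis
  qed
  have a: "M1 * ?n - g1 = M2 * ?n - g2" using L i bounds unfolding code_len_def by linarith
  have M: "M1 = M2"
  proof (rule linorder_cases[of M1 M2])
    assume "M1 < M2"
    then have "M1 * ?n + ?n \<le> M2 * ?n" by (metis Suc_leI mult_Suc mult_le_mono1 add.commute)
    then show ?thesis using a bounds by linarith
  next
    assume "M2 < M1"
    then have "M2 * ?n + ?n \<le> M1 * ?n" by (metis Suc_leI mult_Suc mult_le_mono1 add.commute)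
    then show ?thesis using a bounds by linarith
  qed
  moreover have "g1 = g2" using a[unfolded M] bounds[unfolded M] by linarith
  ultimately show ?thesis using i by simp
qed

lemma canonical_code_len_ge:
  assumes "canonical w i g M" "3 \<le> M"
  shows "length w \<le> code_len w i g M"
proof -
  have "3 * length w \<le> M * length w" using assms(2) by simp
  then show ?thesis using assms(1) unfolding canonical_def code_len_def by linarith
qed

text \<open>With at least three copies the factor covers a full period of \<open>w\<^sup>\<omega>\<close>, so beyond \<open>M = 3\<close> both
  canonicity and the shape of the factor no longer depend on \<open>M\<close>.\<close>

lemma canonical_min3:
  assumes w: "w \<noteq> []" and c: "canonical w i g M" and m: "min M 3 = min M' 3"
  shows "canonical w i g M'"
proof (cases "M = M'")
  case False
  then have M: "3 \<le> M" "3 \<le> M'" using m by (auto simp: min_def split: if_splits)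
  let ?n = "length w"
  have ig: "i < ?n" "g < ?n" using c unfolding canonical_def by auto
  have "3 * ?n \<le> M' * ?n" using M by simp
  then have b: "i + g \<le> M' * ?n" using ig by linarith
  have L: "length w \<le> code_len w i g M" "length w \<le> code_len w i g M'"
    using canonical_code_len_ge[OF c M(1)] \<open>3 * ?n \<le> M' * ?n\<close> ig unfolding code_len_def by linarith+
  have "\<forall>i'<i. cyc_factor w i' (code_len w i g M') \<noteq> cyc_factor w i (code_len w i g M')"
  proof (intro allI impI)
    fix i' assume "i' < i"
    then have "cyc_factor w i' (code_len w i g M) \<noteq> cyc_factor w i (code_len w i g M)"
      using c unfolding canonical_def by auto
    then show "cyc_factor w i' (code_len w i g M') \<noteq> cyc_factor w i (code_len w i g M')"
      using cyc_factor_eq_iff_min[OF w, of i' _ i] L by (metis min.absorb2)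
  qed
  then show ?thesis using ig b unfolding canonical_def by auto
qed (use c in simp)

lemma canonical_min3_code_len:
  assumes "canonical w i g M" "canonical w i g M'" "min M 3 = min M' 3"
  shows "min (code_len w i g M) (length w) = min (code_len w i g M') (length w)"
proof (cases "M = M'")
  case False
  then have "3 \<le> M" "3 \<le> M'" using assms(3) by (auto simp: min_def split: if_splits)
  then show ?thesis using canonical_code_len_ge assms by (metis min.absorb2)
qed simp

lemma canonical_cyc_factor_shift:
  assumes "canonical w i g M" "canonical w i g M'"
  shows "cyc_factor w (x + code_len w i g M) L = cyc_factor w (x + code_len w i g M') L"
proof -
  have a: "i + g \<le> M * length w" "i + g \<le> M' * length w"
    using assms unfolding canonical_def by auto
  have shift: "cyc_factor w (x + code_len w i g N) L = cyc_factor w (x + code_len w i g N') L"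
    if "N \<le> N'" "i + g \<le> N * length w" for N N'
  proof -
    have "N' * length w = N * length w + (N' - N) * length w"
      using that(1) by (simp add: diff_mult_distrib)
    then have "x + code_len w i g N' = x + code_len w i g N + (N' - N) * length w"
      using that(2) unfolding code_len_def by linarith
    then show ?thesis by (metis cyc_factor_add_mult)
  qed
  show ?thesis
  proof (cases "M \<le> M'")
    case True
    then show ?thesis using shift a(1) by blast
  next
    case False
    then show ?thesis using shift[of M' M] a(2) by simp
  qed
qed

lemma canonical_code_len_sum_iff_int:
  assumes "canonical w iI gI A" "canonical w iJ gJ B" "canonical w iK gK C"
  shows "code_len w iI gI A = code_len w iJ gJ B + code_len w iK gK C \<longleftrightarrow>
    (int A - int B - int C) * int (length w) = int iI + int gI - int iJ - int gJ - int iK - int gK"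
proof -
  have "int (code_len w iI gI A) = int A * int (length w) - int iI - int gI"
    "int (code_len w iJ gJ B) = int B * int (length w) - int iJ - int gJ"
    "int (code_len w iK gK C) = int C * int (length w) - int iK - int gK"
    using assms unfolding code_len_def canonical_def by (auto simp: of_nat_diff)
  then show ?thesis by (simp add: algebra_simps) linarith
qed

text \<open>Since \<open>|u| = M|w| - i - g\<close> with \<open>i, g < |w|\<close>, the length equation \<open>|u| = |v| + |v'|\<close> pins
  \<open>M - M\<^sub>v - M\<^sub>v'\<close> to one of the five values \<open>-3, \<dots>, 1\<close>.\<close>

lemma canonical_code_len_sum_offset:
  assumes w: "w \<noteq> []"
    and c: "canonical w iI gI A" "canonical w iJ gJ B" "canonical w iK gK C"
    and sum: "code_len w iI gI A = code_len w iJ gJ B + code_len w iK gK C"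
  shows "-3 \<le> int A - int B - int C \<and> int A - int B - int C \<le> 1"
proof -
  let ?n = "int (length w)" and ?X = "int A - int B - int C"
  have "iI < length w" "gI < length w" "iJ < length w" "gJ < length w" "iK < length w" "gK < length w"
    using c unfolding canonical_def by auto
  moreover have "?X * ?n = int iI + int gI - int iJ - int gJ - int iK - int gK"
    using sum canonical_code_len_sum_iff_int[OF c] by blast
  ultimately have "?X * ?n < 2 * ?n" "-4 * ?n < ?X * ?n" by linarith+
  moreover have "?n > 0" using w by simp
  ultimately have "?X < 2" "-4 < ?X" using mult_less_cancel_right_pos by blast+
  then show ?thesis by linarith
qed

lemma canonical_code_len_sum_transfer:
  assumes w: "w \<noteq> []"
    and cI: "canonical w iI gI MI" "canonical w iI gI MI'"
    and cJ: "canonical w iJ gJ MJ" "canonical w iJ gJ MJ'"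
    and cK: "canonical w iK gK MK" "canonical w iK gK MK'"
    and R: "\<And>c::int. -3 \<le> c \<Longrightarrow> c \<le> 1 \<Longrightarrow>
      int MI = int MJ + int MK + c \<longleftrightarrow> int MI' = int MJ' + int MK' + c"
    and sum: "code_len w iI gI MI = code_len w iJ gJ MJ + code_len w iK gK MK"
  shows "code_len w iI gI MI' = code_len w iJ gJ MJ' + code_len w iK gK MK'"
proof -
  let ?X = "int MI - int MJ - int MK"
  have "int MI' = int MJ' + int MK' + ?X"
    using R[of ?X] canonical_code_len_sum_offset[OF w cI(1) cJ(1) cK(1) sum] by simp
  then have "int MI' - int MJ' - int MK' = ?X" by simp
  then show ?thesis
    using sum canonical_code_len_sum_iff_int[OF cI(1) cJ(1) cK(1)]
      canonical_code_len_sum_iff_int[OF cI(2) cJ(2) cK(2)] by simp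
qed

lemma canonical_concat_iff:
  assumes w: "w \<noteq> []"
    and cI: "canonical w iI gI MI" "canonical w iI gI MI'"
    and cJ: "canonical w iJ gJ MJ" "canonical w iJ gJ MJ'"
    and cK: "canonical w iK gK MK" "canonical w iK gK MK'"
    and mJ: "min MJ 3 = min MJ' 3" and mK: "min MK 3 = min MK' 3"
    and R: "\<And>c::int. -3 \<le> c \<Longrightarrow> c \<le> 1 \<Longrightarrow>
      int MI = int MJ + int MK + c \<longleftrightarrow> int MI' = int MJ' + int MK' + c"
  shows "cyc_factor w iI (code_len w iI gI MI) =
      cyc_factor w iJ (code_len w iJ gJ MJ) @ cyc_factor w iK (code_len w iK gK MK) \<longleftrightarrow>
    cyc_factor w iI (code_len w iI gI MI') =
      cyc_factor w iJ (code_len w iJ gJ MJ') @ cyc_factor w iK (code_len w iK gK MK')"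
proof -
  have "code_len w iI gI MI = code_len w iJ gJ MJ + code_len w iK gK MK \<longleftrightarrow>
      code_len w iI gI MI' = code_len w iJ gJ MJ' + code_len w iK gK MK'"
    using canonical_code_len_sum_transfer[OF w cI cJ cK R]
      canonical_code_len_sum_transfer[OF w cI(2,1) cJ(2,1) cK(2,1)] R by blast
  then show ?thesis
    unfolding cyc_factor_eq_append_iff[OF w]
    using canonical_min3_code_len[OF cJ mJ] canonical_min3_code_len[OF cK mK]
      canonical_cyc_factor_shift[OF cJ, of iI]
    by simp
qed

lemma mem_idxs_iff: "I \<in> idxs n \<longleftrightarrow> (case I of Inl i \<Rightarrow> i < n | Inr _ \<Rightarrow> True)"
  by (cases I) (auto simp: idxs_def)

lemma Inr_mem_idxs [simp]: "Inr c \<in> idxs n"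
  by (simp add: mem_idxs_iff)

lemma Inl_mem_idxs [simp]: "Inl i \<in> idxs n \<longleftrightarrow> i < n"
  by (simp add: mem_idxs_iff)

lemma idxs_mono_Suc: "I \<in> idxs n \<Longrightarrow> I \<in> idxs (Suc n)"
  by (auto simp: mem_idxs_iff split: sum.splits)

lemma ext_snoc: "I \<in> idxs (length xs) \<Longrightarrow> ext w (xs @ [x]) I = ext w xs I"
  by (auto simp: ext_def mem_idxs_iff nth_append split: sum.splits)

lemma ext_snoc_last [simp]: "n = length xs \<Longrightarrow> ext w (xs @ [x]) (Inl n) = x"
  by (simp add: ext_def)

lemma None_mem_univ [simp]: "None \<in> univ w"
  by (simp add: univ_def)

lemma partial_iso_length: "partial_iso w v xs ys \<Longrightarrow> length xs = length ys"
  by (simp add: partial_iso_def)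

lemma partial_iso_eq_iff:
  "partial_iso w v xs ys \<Longrightarrow> I \<in> idxs (length xs) \<Longrightarrow> J \<in> idxs (length xs) \<Longrightarrow>
    ext w xs I = ext w xs J \<longleftrightarrow> ext v ys I = ext v ys J"
  unfolding partial_iso_def by blast

lemma partial_iso_concat_iff:
  "partial_iso w v xs ys \<Longrightarrow> I \<in> idxs (length xs) \<Longrightarrow> J \<in> idxs (length xs) \<Longrightarrow> K \<in> idxs (length xs) \<Longrightarrow>
    concat_rel (ext w xs I) (ext w xs J) (ext w xs K) \<longleftrightarrow> concat_rel (ext v ys I) (ext v ys J) (ext v ys K)"
  unfolding partial_iso_def by blast

lemma partial_iso_sym: "partial_iso w v xs ys \<Longrightarrow> partial_iso v w ys xs"
  unfolding partial_iso_def by auto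

lemma dup_wins_sym: "dup_wins n w v xs ys \<Longrightarrow> dup_wins n v w ys xs"
  by (induction n arbitrary: xs ys) (simp add: partial_iso_sym, simp, blast)

lemma partial_iso_butlast:
  assumes "partial_iso w v (xs @ [x]) (ys @ [y])"
  shows "partial_iso w v xs ys"
proof -
  have l: "length xs = length ys" using partial_iso_length[OF assms] by simp
  show ?thesis unfolding partial_iso_def
  proof (rule conjI[OF l], intro ballI)
    fix I J K :: "nat + 'a option"
    assume ijk: "I \<in> idxs (length xs)" "J \<in> idxs (length xs)" "K \<in> idxs (length xs)"
    then have "I \<in> idxs (length (xs @ [x]))" "J \<in> idxs (length (xs @ [x]))" "K \<in> idxs (length (xs @ [x]))"
      by (simp_all add: idxs_mono_Suc)
    then have "(ext w (xs @ [x]) I = ext w (xs @ [x]) J \<longleftrightarrow> ext v (ys @ [y]) I = ext v (ys @ [y]) J) \<and>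
        (concat_rel (ext w (xs @ [x]) I) (ext w (xs @ [x]) J) (ext w (xs @ [x]) K) \<longleftrightarrow>
         concat_rel (ext v (ys @ [y]) I) (ext v (ys @ [y]) J) (ext v (ys @ [y]) K))"
      using partial_iso_eq_iff[OF assms] partial_iso_concat_iff[OF assms] by blast
    then show "(ext w xs I = ext w xs J \<longleftrightarrow> ext v ys I = ext v ys J) \<and>
        (concat_rel (ext w xs I) (ext w xs J) (ext w xs K) \<longleftrightarrow>
         concat_rel (ext v ys I) (ext v ys J) (ext v ys K))"
      using ijk l by (simp add: ext_snoc)
  qed
qed

lemma dup_wins_partial_iso: "dup_wins n w v xs ys \<Longrightarrow> partial_iso w v xs ys"
proof (induction n arbitrary: xs ys)
  case (Suc n)
  then obtain y where "dup_wins n w v (xs @ [None]) (ys @ [y])" by fastforce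
  then show ?case using Suc.IH partial_iso_butlast by blast
qed simp

text \<open>Every factor \<open>x\<close> satisfies \<open>x = x \<cdot> \<epsilon>\<close> while \<open>\<bottom>\<close> does not, so \<open>\<bottom>\<close> is definable.\<close>

lemma partial_iso_None_iff:
  assumes "partial_iso w v xs ys" "I \<in> idxs (length xs)"
  shows "ext w xs I = None \<longleftrightarrow> ext v ys I = None"
proof -
  have \<epsilon>: "ext w xs (Inr None) = Some []" "ext v ys (Inr None) = Some []"
    by (simp_all add: ext_def cinterp_def)
  have "concat_rel x x (Some []) \<longleftrightarrow> x \<noteq> None" for x :: "'a list option"
    by (auto simp: concat_rel_def)
  then have "ext w xs I \<noteq> None \<longleftrightarrow> ext v ys I \<noteq> None"
    using partial_iso_concat_iff[OF assms(1) assms(2) assms(2), of "Inr None"] \<epsilon> by simp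
  then show ?thesis by blast
qed

lemma partial_iso_snoc_concat_iff:
  assumes "partial_iso w v (xs @ [x]) (ys @ [y])" "J \<in> idxs (length xs)" "K \<in> idxs (length xs)"
  shows "concat_rel x (ext w xs J) (ext w xs K) \<longleftrightarrow> concat_rel y (ext v ys J) (ext v ys K)"
    and "concat_rel (ext w xs J) x (ext w xs K) \<longleftrightarrow> concat_rel (ext v ys J) y (ext v ys K)"
proof -
  have l: "length ys = length xs" using partial_iso_length[OF assms(1)] by simp
  note cc = partial_iso_concat_iff[OF assms(1)]
  show "concat_rel x (ext w xs J) (ext w xs K) \<longleftrightarrow> concat_rel y (ext v ys J) (ext v ys K)"
    using cc[of "Inl (length xs)" J K] assms(2,3) l by (simp add: idxs_mono_Suc ext_snoc)
  show "concat_rel (ext w xs J) x (ext w xs K) \<longleftrightarrow> concat_rel (ext v ys J) y (ext v ys K)"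
    using cc[of J "Inl (length xs)" K] assms(2,3) l by (simp add: idxs_mono_Suc ext_snoc)
qed

lemma sublist_replicate_iff: "sublist u (replicate p a) \<longleftrightarrow> (\<exists>M\<le>p. u = replicate M a)"
proof
  assume s: "sublist u (replicate p a)"
  then have "\<forall>y\<in>set u. y = a" using set_mono_sublist by fastforce
  then have "u = replicate (length u) a" by (simp add: replicate_length_same)
  moreover have "length u \<le> p" using sublist_length_le[OF s] by simp
  ultimately show "\<exists>M\<le>p. u = replicate M a" by blast
next
  assume "\<exists>M\<le>p. u = replicate M a"
  then obtain M where "M \<le> p" "u = replicate M a" by blast
  then have "replicate p a = u @ replicate (p - M) a" by (simp flip: replicate_add)
  then show "sublist u (replicate p a)" by (metis prefixI prefix_imp_sublist)
qed

lemma mem_univ_replicate_iff: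
  "x \<in> univ (replicate p a) \<longleftrightarrow> x = None \<or> (\<exists>M\<le>p. x = Some (replicate M a))"
  unfolding univ_def Facs_def by (auto simp: sublist_replicate_iff)

lemma replicate_eq_append_iff: "replicate X a = replicate Y a @ replicate Z a \<longleftrightarrow> X = Y + Z"
  by (metis length_append length_replicate replicate_add)

lemma replicate_eq_snoc_iff: "replicate T a = y @ [a] \<longleftrightarrow> 1 \<le> T \<and> y = replicate (T - 1) a"
  by (cases T) (auto simp flip: replicate_append_same)

lemma ext_replicate_letter: "1 \<le> p \<Longrightarrow> ext (replicate p a) ms (Inr (Some a)) = Some [a]"
  by (simp add: ext_def cinterp_def)

lemma ext_mem_univ_replicate:
  assumes "set ms \<subseteq> univ (replicate p a)" "I \<in> idxs (length ms)" "1 \<le> p"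
  shows "ext (replicate p a) ms I \<in> univ (replicate p a)"
proof (cases I)
  case (Inl i)
  then show ?thesis using assms by (auto simp: ext_def)
next
  case (Inr c)
  then show ?thesis using assms(3)
    by (cases c) (auto simp: ext_def cinterp_def mem_univ_replicate_iff intro: exI[of _ 1])
qed

definition unary_sum :: "'a \<Rightarrow> int \<Rightarrow> 'a list option \<Rightarrow> 'a list option \<Rightarrow> 'a list option \<Rightarrow> bool" where
  "unary_sum a c x y z \<longleftrightarrow> (\<exists>X Y Z. x = Some (replicate X a) \<and> y = Some (replicate Y a) \<and>
     z = Some (replicate Z a) \<and> int X = int Y + int Z + c)"

lemma unary_sum_swap: "unary_sum a c x y z \<longleftrightarrow> unary_sum a c x z y"
  unfolding unary_sum_def by (metis add.commute)

lemma unary_sum_0_iff: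
  assumes "x \<in> univ (replicate p a)" "y \<in> univ (replicate p a)" "z \<in> univ (replicate p a)"
  shows "unary_sum a 0 x y z \<longleftrightarrow> concat_rel x y z"
  using assms unfolding unary_sum_def concat_rel_def mem_univ_replicate_iff
  by (auto simp: replicate_eq_append_iff)

lemma unary_sum_middle_shorter:
  assumes "unary_sum a c x t z" "concat_rel t y (Some [a])"
  shows "unary_sum a (c + 1) x y z"
proof -
  obtain X T Z where e: "x = Some (replicate X a)" "t = Some (replicate T a)"
      "z = Some (replicate Z a)" "int X = int T + int Z + c"
    using assms(1) unfolding unary_sum_def by blast
  then obtain y' where "y = Some y'" "replicate T a = y' @ [a]"
    using assms(2) unfolding concat_rel_def by auto
  then show ?thesis using e unfolding unary_sum_def replicate_eq_snoc_iff by force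
qed

lemma unary_sum_middle_longer:
  assumes "unary_sum a c x t z" "concat_rel y t (Some [a])"
  shows "unary_sum a (c - 1) x y z"
proof -
  obtain X T Z where e: "x = Some (replicate X a)" "t = Some (replicate T a)"
      "z = Some (replicate Z a)" "int X = int T + int Z + c"
    using assms(1) unfolding unary_sum_def by blast
  then have "y = Some (replicate (Suc T) a)"
    using assms(2) unfolding concat_rel_def by (auto simp: replicate_append_same)
  then show ?thesis using e unfolding unary_sum_def
    by (intro exI[of _ X] exI[of _ "Suc T"] exI[of _ Z]) auto
qed

definition preserves_unary_sum ::
    "nat \<Rightarrow> nat \<Rightarrow> 'a \<Rightarrow> int \<Rightarrow> 'a list option list \<Rightarrow> 'a list option list \<Rightarrow> bool" where
  "preserves_unary_sum p q a c ms ms' \<longleftrightarrow>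
     (\<forall>I\<in>idxs (length ms). \<forall>J\<in>idxs (length ms). \<forall>K\<in>idxs (length ms).
        unary_sum a c (ext (replicate p a) ms I) (ext (replicate p a) ms J) (ext (replicate p a) ms K) \<longrightarrow>
        unary_sum a c (ext (replicate q a) ms' I) (ext (replicate q a) ms' J) (ext (replicate q a) ms' K))"

lemma preserves_unary_sum_snocD:
  assumes "preserves_unary_sum p q a c (ms @ [t]) (ms' @ [t'])" "length ms' = length ms"
    and "I \<in> idxs (length ms)" "K \<in> idxs (length ms)"
    and "unary_sum a c (ext (replicate p a) ms I) t (ext (replicate p a) ms K)"
  shows "unary_sum a c (ext (replicate q a) ms' I) t' (ext (replicate q a) ms' K)"
  using assms(1)[unfolded preserves_unary_sum_def, rule_format, of I "Inl (length ms)" K] assms(2-5)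
  by (simp add: idxs_mono_Suc ext_snoc)

lemma partial_iso_preserves_unary_sum_0:
  assumes "partial_iso (replicate p a) (replicate q a) ms ms'"
    and "set ms \<subseteq> univ (replicate p a)" "set ms' \<subseteq> univ (replicate q a)" "1 \<le> p" "1 \<le> q"
  shows "preserves_unary_sum p q a 0 ms ms'"
  unfolding preserves_unary_sum_def
proof (intro ballI impI)
  fix I J K :: "nat + 'a option"
  assume IJK: "I \<in> idxs (length ms)" "J \<in> idxs (length ms)" "K \<in> idxs (length ms)"
  have l: "length ms' = length ms" using partial_iso_length[OF assms(1)] by simp
  note univP = ext_mem_univ_replicate[OF assms(2) _ assms(4)]
  note univQ = ext_mem_univ_replicate[OF assms(3) _ assms(5), unfolded l]
  assume "unary_sum a 0 (ext (replicate p a) ms I) (ext (replicate p a) ms J) (ext (replicate p a) ms K)"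
  then show "unary_sum a 0 (ext (replicate q a) ms' I) (ext (replicate q a) ms' J) (ext (replicate q a) ms' K)"
    using partial_iso_concat_iff[OF assms(1) IJK] IJK
    by (simp add: unary_sum_0_iff[OF univP univP univP] unary_sum_0_iff[OF univQ univQ univQ])
qed

text \<open>For \<open>c > 0\<close> Spoiler picks the power \<open>t = y a\<close>, which Duplicator must answer by some \<open>t' = y' a\<close>;
  this reduces \<open>|x| = |y| + |z| + c\<close> to \<open>|x| = |t| + |z| + (c - 1)\<close> with one round fewer.\<close>

lemma unary_sum_transfer_lengthen:
  assumes dw: "dup_wins (Suc r) (replicate p a) (replicate q a) ms ms'"
    and univ: "set ms \<subseteq> univ (replicate p a)" and pq: "1 \<le> p" "1 \<le> q" and c: "0 < c"
    and step: "\<And>t t'. t \<in> univ (replicate p a) \<Longrightarrow> t' \<in> univ (replicate q a) \<Longrightarrow>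
      dup_wins r (replicate p a) (replicate q a) (ms @ [t]) (ms' @ [t']) \<Longrightarrow>
      preserves_unary_sum p q a (c - 1) (ms @ [t]) (ms' @ [t'])"
    and IJK: "I \<in> idxs (length ms)" "J \<in> idxs (length ms)" "K \<in> idxs (length ms)"
    and sum: "unary_sum a c (ext (replicate p a) ms I) (ext (replicate p a) ms J) (ext (replicate p a) ms K)"
  shows "unary_sum a c (ext (replicate q a) ms' I) (ext (replicate q a) ms' J) (ext (replicate q a) ms' K)"
proof -
  let ?P = "replicate p a" and ?Q = "replicate q a" and ?A = "Inr (Some a) :: nat + 'a option"
  obtain MI MJ MK where M: "ext ?P ms I = Some (replicate MI a)"
      "ext ?P ms J = Some (replicate MJ a)" "ext ?P ms K = Some (replicate MK a)"
      "int MI = int MJ + int MK + c"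
    using sum unfolding unary_sum_def by blast
  have "MI \<le> p" using ext_mem_univ_replicate[OF univ IJK(1) pq(1)] M(1)
    by (auto simp: mem_univ_replicate_iff)
  define t where "t = Some (replicate (Suc MJ) a)"
  have "Suc MJ \<le> p" using \<open>MI \<le> p\<close> M(4) c by linarith
  then have t: "t \<in> univ ?P" unfolding t_def mem_univ_replicate_iff by blast
  then obtain t' where t': "t' \<in> univ ?Q" "dup_wins r ?P ?Q (ms @ [t]) (ms' @ [t'])"
    using dw by auto
  note pi = dup_wins_partial_iso[OF t'(2)]
  have l: "length ms' = length ms" using partial_iso_length[OF pi] by simp
  have "concat_rel t (ext ?P ms J) (ext ?P ms ?A)"
    using M(2) pq(1) unfolding t_def concat_rel_def by (simp add: ext_replicate_letter replicate_append_same)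
  then have t'_snoc: "concat_rel t' (ext ?Q ms' J) (Some [a])"
    using partial_iso_snoc_concat_iff(1)[OF pi IJK(2)] pq(2) by (simp add: ext_replicate_letter)
  have "unary_sum a (c - 1) (ext ?P ms I) t (ext ?P ms K)"
    using M unfolding unary_sum_def t_def by (intro exI[of _ MI] exI[of _ "Suc MJ"] exI[of _ MK]) auto
  then have "unary_sum a (c - 1) (ext ?Q ms' I) t' (ext ?Q ms' K)"
    using preserves_unary_sum_snocD[OF step[OF t t'] l IJK(1,3)] by blast
  from unary_sum_middle_shorter[OF this t'_snoc] show ?thesis by simp
qed

text \<open>For \<open>c < 0\<close> Spoiler picks \<open>t\<close> with \<open>y = t a\<close> for a nonempty one of \<open>y, z\<close>, say \<open>y\<close>.\<close>

lemma unary_sum_transfer_shorten: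
  assumes dw: "dup_wins (Suc r) (replicate p a) (replicate q a) ms ms'"
    and univ: "set ms \<subseteq> univ (replicate p a)" and pq: "1 \<le> p" "1 \<le> q"
    and step: "\<And>t t'. t \<in> univ (replicate p a) \<Longrightarrow> t' \<in> univ (replicate q a) \<Longrightarrow>
      dup_wins r (replicate p a) (replicate q a) (ms @ [t]) (ms' @ [t']) \<Longrightarrow>
      preserves_unary_sum p q a (c + 1) (ms @ [t]) (ms' @ [t'])"
    and IJK: "I \<in> idxs (length ms)" "J \<in> idxs (length ms)" "K \<in> idxs (length ms)"
    and sum: "unary_sum a c (ext (replicate p a) ms I) (ext (replicate p a) ms J) (ext (replicate p a) ms K)"
    and MJ: "ext (replicate p a) ms J = Some (replicate MJ a)" "1 \<le> MJ"
  shows "unary_sum a c (ext (replicate q a) ms' I) (ext (replicate q a) ms' J) (ext (replicate q a) ms' K)"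
proof -
  let ?P = "replicate p a" and ?Q = "replicate q a" and ?A = "Inr (Some a) :: nat + 'a option"
  obtain MI MK where M: "ext ?P ms I = Some (replicate MI a)" "ext ?P ms K = Some (replicate MK a)"
      "int MI = int MJ + int MK + c"
    using sum MJ(1) unfolding unary_sum_def by auto
  have "MJ \<le> p" using ext_mem_univ_replicate[OF univ IJK(2) pq(1)] MJ(1)
    by (auto simp: mem_univ_replicate_iff)
  define t where "t = Some (replicate (MJ - 1) a)"
  have t: "t \<in> univ ?P" using \<open>MJ \<le> p\<close> unfolding t_def mem_univ_replicate_iff by simp
  then obtain t' where t': "t' \<in> univ ?Q" "dup_wins r ?P ?Q (ms @ [t]) (ms' @ [t'])"
    using dw by auto
  note pi = dup_wins_partial_iso[OF t'(2)]
  have l: "length ms' = length ms" using partial_iso_length[OF pi] by simp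
  have "concat_rel (ext ?P ms J) t (ext ?P ms ?A)"
    using MJ pq(1) unfolding t_def concat_rel_def by (simp add: ext_replicate_letter replicate_eq_snoc_iff)
  then have y'_snoc: "concat_rel (ext ?Q ms' J) t' (Some [a])"
    using partial_iso_snoc_concat_iff(2)[OF pi IJK(2)] pq(2) by (simp add: ext_replicate_letter)
  have "unary_sum a (c + 1) (ext ?P ms I) t (ext ?P ms K)"
    using M MJ(2) unfolding unary_sum_def t_def
    by (intro exI[of _ MI] exI[of _ "MJ - 1"] exI[of _ MK]) auto
  then have "unary_sum a (c + 1) (ext ?Q ms' I) t' (ext ?Q ms' K)"
    using preserves_unary_sum_snocD[OF step[OF t t'] l IJK(1,3)] by blast
  from unary_sum_middle_longer[OF this y'_snoc] show ?thesis by simp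
qed

lemma dup_wins_preserves_unary_sum:
  assumes "dup_wins r (replicate p a) (replicate q a) ms ms'"
    and "set ms \<subseteq> univ (replicate p a)" "set ms' \<subseteq> univ (replicate q a)" "1 \<le> p" "1 \<le> q"
    and "\<bar>c\<bar> \<le> int r"
  shows "preserves_unary_sum p q a c ms ms'"
  using assms
proof (induction r arbitrary: ms ms' c)
  case 0
  then show ?case using partial_iso_preserves_unary_sum_0 dup_wins_partial_iso by fastforce
next
  case (Suc r)
  let ?P = "replicate p a" and ?Q = "replicate q a"
  have step: "preserves_unary_sum p q a d (ms @ [t]) (ms' @ [t'])"
    if "\<bar>d\<bar> \<le> int r" "t \<in> univ ?P" "t' \<in> univ ?Q" "dup_wins r ?P ?Q (ms @ [t]) (ms' @ [t'])" for d t t'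
    using Suc.IH[OF that(4)] Suc.prems(2-5) that(1-3) by simp
  note lengthen = unary_sum_transfer_lengthen[OF Suc.prems(1,2,4,5)]
  note shorten = unary_sum_transfer_shorten[OF Suc.prems(1,2,4,5)]
  show ?case
    unfolding preserves_unary_sum_def
  proof (intro ballI impI)
    fix I J K assume IJK: "I \<in> idxs (length ms)" "J \<in> idxs (length ms)" "K \<in> idxs (length ms)"
      and sum: "unary_sum a c (ext ?P ms I) (ext ?P ms J) (ext ?P ms K)"
    then obtain MI MJ MK where M: "ext ?P ms J = Some (replicate MJ a)"
        "ext ?P ms K = Some (replicate MK a)" "int MI = int MJ + int MK + c"
      unfolding unary_sum_def by blast
    consider "c = 0" | "0 < c" | "c < 0 \<and> 1 \<le> MJ" | "c < 0 \<and> 1 \<le> MK" using M(3) by linarith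
    then show "unary_sum a c (ext ?Q ms' I) (ext ?Q ms' J) (ext ?Q ms' K)"
    proof cases
      case 1
      then show ?thesis
        using partial_iso_preserves_unary_sum_0[OF dup_wins_partial_iso[OF Suc.prems(1)] Suc.prems(2-5)]
          IJK sum unfolding preserves_unary_sum_def by simp
    next
      case 2
      with Suc.prems(6) have "\<bar>c - 1\<bar> \<le> int r" by simp
      from lengthen[OF 2 step[OF this] IJK sum] show ?thesis .
    next
      case 3
      with Suc.prems(6) have "\<bar>c + 1\<bar> \<le> int r" by simp
      from shorten[OF step[OF this] IJK sum M(1)] 3 show ?thesis by simp
    next
      case 4
      with Suc.prems(6) have "\<bar>c + 1\<bar> \<le> int r" by simp
      from shorten[OF step[OF this] IJK(1,3,2) unary_sum_swap[THEN iffD1, OF sum] M(2)] 4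
      have "unary_sum a c (ext ?Q ms' I) (ext ?Q ms' K) (ext ?Q ms' J)" by simp
      then show ?thesis by (rule unary_sum_swap[THEN iffD1])
    qed
  qed
qed

text \<open>Over \<open>a\<^sup>p\<close> the powers \<open>\<epsilon>\<close>, \<open>a\<close>, \<open>aa\<close> are definable from the constants, so a partial isomorphism
  matches powers of \<open>a\<close> up to the threshold \<open>3\<close>.\<close>

lemma partial_iso_replicate_min3:
  assumes pq: "1 \<le> p" "1 \<le> q" and pi: "partial_iso (replicate p a) (replicate q a) ms ms'"
    and I: "I \<in> idxs (length ms)"
    and x: "ext (replicate p a) ms I = Some (replicate M a)"
    and y: "ext (replicate q a) ms' I = Some (replicate M' a)"
  shows "min M 3 = min M' 3"
proof -
  let ?E = "Inr None :: nat + 'a option" and ?A = "Inr (Some a) :: nat + 'a option"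
  have \<epsilon>: "ext (replicate p a) ms ?E = Some (replicate 0 a)" "ext (replicate q a) ms' ?E = Some (replicate 0 a)"
    by (simp_all add: ext_def cinterp_def)
  have letter: "ext (replicate p a) ms ?A = Some (replicate 1 a)" "ext (replicate q a) ms' ?A = Some (replicate 1 a)"
    using pq by (simp_all add: ext_replicate_letter)
  have "M = 0 \<longleftrightarrow> M' = 0"
    using partial_iso_eq_iff[OF pi I, of ?E] unfolding x y \<epsilon> by simp
  moreover have "M = 1 \<longleftrightarrow> M' = 1"
    using partial_iso_eq_iff[OF pi I, of ?A] unfolding x y letter option.inject replicate_eq_replicate
    by simp
  moreover have "M = 2 \<longleftrightarrow> M' = 2"
    using partial_iso_concat_iff[OF pi I, of ?A ?A] unfolding x y letter concat_rel_def
    by (simp add: replicate_eq_append_iff[of _ a 1 1, simplified] numeral_2_eq_2)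
  ultimately show ?thesis by (simp add: min_def) linarith
qed

definition decode :: "'a list \<Rightarrow> nat \<times> nat \<Rightarrow> 'a list option \<Rightarrow> 'a list option" where
  "decode w d = map_option (\<lambda>s. cyc_factor w (fst d) (code_len w (fst d) (snd d) (length s)))"

definition canonical_for :: "'a list \<Rightarrow> nat \<times> nat \<Rightarrow> 'a list option \<Rightarrow> bool" where
  "canonical_for w d m \<longleftrightarrow> (\<forall>s. m = Some s \<longrightarrow> canonical w (fst d) (snd d) (length s))"

definition is_unary :: "'a \<Rightarrow> 'a list option \<Rightarrow> bool" where
  "is_unary a m \<longleftrightarrow> m = None \<or> (\<exists>M. m = Some (replicate M a))"

lemma decode_eq_iff:
  assumes "canonical_for w d m" "canonical_for w d' m'" "is_unary a m" "is_unary a m'"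
    "m \<noteq> None" "m' \<noteq> None"
  shows "decode w d m = decode w d' m' \<longleftrightarrow> d = d' \<and> m = m'"
proof
  obtain M M' where mm: "m = Some (replicate M a)" "m' = Some (replicate M' a)"
    using assms(3-6) unfolding is_unary_def by auto
  have "canonical w (fst d) (snd d) M" "canonical w (fst d') (snd d') M'"
    using assms(1,2) mm unfolding canonical_for_def by auto
  moreover assume "decode w d m = decode w d' m'"
  ultimately show "d = d' \<and> m = m'"
    using canonical_inj mm unfolding decode_def by (fastforce simp: prod_eq_iff)
qed simp

definition decode_compatible ::
    "'a list \<Rightarrow> 'a \<Rightarrow> nat \<times> nat \<Rightarrow> 'a list option \<Rightarrow> 'a list option \<Rightarrow> bool" where
  "decode_compatible w a d x x' \<longleftrightarrow>
     canonical_for w d x \<and> canonical_for w d x' \<and> is_unary a x \<and> is_unary a x' \<and>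
     (x = None \<longleftrightarrow> x' = None) \<and>
     (\<forall>M M'. x = Some (replicate M a) \<longrightarrow> x' = Some (replicate M' a) \<longrightarrow> min M 3 = min M' 3)"

lemma decode_eq_transfer:
  assumes "decode_compatible w a dI x x'" "decode_compatible w a dJ y y'" "x = y \<longleftrightarrow> x' = y'"
  shows "decode w dI x = decode w dJ y \<longleftrightarrow> decode w dI x' = decode w dJ y'"
proof (cases "x = None \<or> y = None")
  case True
  then show ?thesis using assms(1,2) unfolding decode_compatible_def decode_def by auto
next
  case False
  then show ?thesis using assms decode_eq_iff[of w dI _ dJ _ a] unfolding decode_compatible_def
    by (metis (no_types, lifting))
qed

lemma decode_concat_transfer:
  assumes w: "w \<noteq> []"
    and compat: "decode_compatible w a dI x x'" "decode_compatible w a dJ y y'"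
      "decode_compatible w a dK z z'"
    and sums: "\<And>c. -3 \<le> c \<Longrightarrow> c \<le> 1 \<Longrightarrow> unary_sum a c x y z \<longleftrightarrow> unary_sum a c x' y' z'"
  shows "concat_rel (decode w dI x) (decode w dJ y) (decode w dK z) \<longleftrightarrow>
    concat_rel (decode w dI x') (decode w dJ y') (decode w dK z')"
proof (cases "x = None \<or> y = None \<or> z = None")
  case True
  then show ?thesis using compat unfolding decode_compatible_def decode_def concat_rel_def by auto
next
  case False
  obtain MI MJ MK MI' MJ' MK' where M: "x = Some (replicate MI a)" "y = Some (replicate MJ a)"
      "z = Some (replicate MK a)" "x' = Some (replicate MI' a)" "y' = Some (replicate MJ' a)"
      "z' = Some (replicate MK' a)"
    using False compat unfolding decode_compatible_def is_unary_def by (metis (no_types))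
  obtain iI gI iJ gJ iK gK where d: "dI = (iI, gI)" "dJ = (iJ, gJ)" "dK = (iK, gK)"
    by (metis prod.exhaust)
  have cs: "canonical w iI gI MI" "canonical w iI gI MI'" "canonical w iJ gJ MJ"
      "canonical w iJ gJ MJ'" "canonical w iK gK MK" "canonical w iK gK MK'"
    using compat M d unfolding decode_compatible_def canonical_for_def by auto
  have min3: "min MJ 3 = min MJ' 3" "min MK 3 = min MK' 3"
    using compat M unfolding decode_compatible_def by auto
  have "int MI = int MJ + int MK + c \<longleftrightarrow> int MI' = int MJ' + int MK' + c" if "-3 \<le> c" "c \<le> 1" for c
    using sums[OF that] M unfolding unary_sum_def by auto
  then show ?thesis
    using canonical_concat_iff[OF w cs min3] M d unfolding decode_def concat_rel_def by simp
qed

definition first_pos :: "'a list \<Rightarrow> 'a \<Rightarrow> nat" where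
  "first_pos w b = (LEAST i. w ! i = b)"

definition letter_code :: "'a list \<Rightarrow> 'a \<Rightarrow> nat \<times> nat" where
  "letter_code w b = (first_pos w b, length w - 1 - first_pos w b)"

lemma first_pos:
  assumes "b \<in> set w"
  shows "first_pos w b < length w" "w ! first_pos w b = b" "\<And>i. i < first_pos w b \<Longrightarrow> w ! i \<noteq> b"
proof -
  obtain j where j: "j < length w" "w ! j = b" using assms by (auto simp: in_set_conv_nth)
  show "w ! first_pos w b = b" unfolding first_pos_def using j(2) by (rule LeastI)
  have "first_pos w b \<le> j" unfolding first_pos_def using j(2) by (rule Least_le)
  then show "first_pos w b < length w" using j(1) by simp
  show "\<And>i. i < first_pos w b \<Longrightarrow> w ! i \<noteq> b" unfolding first_pos_def using not_less_Least by blast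
qed

lemma letter_code:
  assumes "b \<in> set w"
  shows "canonical w (fst (letter_code w b)) (snd (letter_code w b)) 1"
    and "decode w (letter_code w b) (Some [a]) = Some [b]"
proof -
  note fp = first_pos[OF assms]
  have L: "code_len w (first_pos w b) (length w - 1 - first_pos w b) 1 = 1"
    using fp(1) unfolding code_len_def by simp
  show "canonical w (fst (letter_code w b)) (snd (letter_code w b)) 1"
    unfolding canonical_def letter_code_def fst_conv snd_conv L
    using fp by (auto simp: cyc_factor_one)
  show "decode w (letter_code w b) (Some [a]) = Some [b]"
    using L fp by (simp add: decode_def letter_code_def cyc_factor_one)
qed

text \<open>Constants of \<open>w\<^sup>p\<close> are simulated in \<open>a\<^sup>p\<close>: \<open>\<epsilon>\<close> by \<open>\<epsilon>\<close>, a letter of \<open>w\<close> by \<open>a\<close>, and a letter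
  absent from \<open>w\<close> by some letter other than \<open>a\<close> (hence interpreted as \<open>\<bottom>\<close> as well).\<close>

definition unary_idx :: "'a list \<Rightarrow> 'a \<Rightarrow> nat + 'a option \<Rightarrow> nat + 'a option" where
  "unary_idx w a I = (case I of
      Inl i \<Rightarrow> Inl i
    | Inr None \<Rightarrow> Inr None
    | Inr (Some b) \<Rightarrow> (if b \<in> set w then Inr (Some a) else Inr (Some (if b \<noteq> a then b else hd w))))"

definition code_idx :: "'a list \<Rightarrow> (nat \<times> nat) list \<Rightarrow> nat + 'a option \<Rightarrow> nat \<times> nat" where
  "code_idx w ds I = (case I of
      Inl i \<Rightarrow> ds ! i
    | Inr None \<Rightarrow> (0, 0)
    | Inr (Some b) \<Rightarrow> letter_code w b)"

lemma unary_idx_mem_idxs: "I \<in> idxs n \<Longrightarrow> unary_idx w a I \<in> idxs n"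
  by (cases I) (auto simp: unary_idx_def split: option.splits)

lemma ext_replicate_is_unary:
  assumes "set ms \<subseteq> univ (replicate p a)" "I \<in> idxs (length ms)" "1 \<le> p"
  shows "is_unary a (ext (replicate p a) ms I)"
  using ext_mem_univ_replicate[OF assms] unfolding mem_univ_replicate_iff is_unary_def by blast

lemma ext_wpow_decode:
  assumes w: "w \<noteq> []" and p: "1 \<le> p" and I: "I \<in> idxs (length ms)"
    and ld: "length ds = length ms" and can: "\<forall>i<length ms. canonical_for w (ds ! i) (ms ! i)"
  shows "ext (wpow w p) (map2 (decode w) ds ms) I =
      decode w (code_idx w ds I) (ext (replicate p a) ms (unary_idx w a I))"
    and "canonical_for w (code_idx w ds I) (ext (replicate p a) ms (unary_idx w a I))"
proof -
  have "ext (wpow w p) (map2 (decode w) ds ms) I =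
      decode w (code_idx w ds I) (ext (replicate p a) ms (unary_idx w a I)) \<and>
    canonical_for w (code_idx w ds I) (ext (replicate p a) ms (unary_idx w a I))"
  proof (cases I)
    case (Inl i)
    then show ?thesis using I ld can by (simp add: ext_def unary_idx_def code_idx_def)
  next
    case (Inr c)
    show ?thesis
    proof (cases c)
      case None
      have "canonical w 0 0 0" using w unfolding canonical_def by simp
      then show ?thesis using Inr None
        by (simp add: ext_def unary_idx_def code_idx_def cinterp_def decode_def code_len_def
            cyc_factor_def canonical_for_def)
    next
      case (Some b)
      have set_w: "set (wpow w p) = set w" using p by (rule set_wpow)
      show ?thesis
      proof (cases "b \<in> set w")
        case True
        then show ?thesis using Inr Some letter_code(1)[OF True] letter_code(2)[OF True, of a] p set_w
          by (simp add: ext_def unary_idx_def code_idx_def cinterp_def canonical_for_def)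
      next
        case False
        have "(if b \<noteq> a then b else hd w) \<noteq> a" using False w by (auto simp: hd_in_set)
        then show ?thesis using Inr Some False set_w
          by (simp add: ext_def unary_idx_def cinterp_def decode_def canonical_for_def)
      qed
    qed
  qed
  then show "ext (wpow w p) (map2 (decode w) ds ms) I =
      decode w (code_idx w ds I) (ext (replicate p a) ms (unary_idx w a I))"
    and "canonical_for w (code_idx w ds I) (ext (replicate p a) ms (unary_idx w a I))" by auto
qed

lemma decode_partial_iso:
  assumes w: "w \<noteq> []" and pq: "1 \<le> p" "1 \<le> q"
    and dw: "dup_wins 3 (replicate p a) (replicate q a) ms ms'"
    and univ: "set ms \<subseteq> univ (replicate p a)" "set ms' \<subseteq> univ (replicate q a)"
    and l: "length ds = length ms" "length ms' = length ms"
    and can: "\<forall>i<length ms. canonical_for w (ds ! i) (ms ! i)"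
      "\<forall>i<length ms. canonical_for w (ds ! i) (ms' ! i)"
  shows "partial_iso (wpow w p) (wpow w q) (map2 (decode w) ds ms) (map2 (decode w) ds ms')"
proof -
  let ?P = "replicate p a" and ?Q = "replicate q a"
  let ?x = "\<lambda>I. ext ?P ms (unary_idx w a I)" and ?y = "\<lambda>I. ext ?Q ms' (unary_idx w a I)"
  let ?d = "code_idx w ds" and ?vp = "ext (wpow w p) (map2 (decode w) ds ms)"
    and ?vq = "ext (wpow w q) (map2 (decode w) ds ms')"
  have pi: "partial_iso ?P ?Q ms ms'" using dup_wins_partial_iso[OF dw] .
  note decP = ext_wpow_decode[where a = a, OF w pq(1) _ l(1) can(1)]
  note decQ = ext_wpow_decode[where a = a, OF w pq(2) _ l(1)[folded l(2)] can(2)[folded l(2)], unfolded l(2)]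
  have compat: "decode_compatible w a (?d I) (?x I) (?y I)" if I: "I \<in> idxs (length ms)" for I
  proof -
    have uI: "unary_idx w a I \<in> idxs (length ms)" using I by (rule unary_idx_mem_idxs)
    show ?thesis
      unfolding decode_compatible_def
      using decP(2)[OF I] decQ(2)[OF I] ext_replicate_is_unary[OF univ(1) uI pq(1)]
        ext_replicate_is_unary[OF univ(2) uI[folded l(2)] pq(2)] partial_iso_None_iff[OF pi uI]
        partial_iso_replicate_min3[OF pq pi uI] by blast
  qed
  have sums: "unary_sum a c (?x I) (?x J) (?x K) \<longleftrightarrow> unary_sum a c (?y I) (?y J) (?y K)"
    if "I \<in> idxs (length ms)" "J \<in> idxs (length ms)" "K \<in> idxs (length ms)" "-3 \<le> c" "c \<le> 1"
    for I J K c
    using dup_wins_preserves_unary_sum[OF dw univ pq, of c]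
      dup_wins_preserves_unary_sum[OF dup_wins_sym[OF dw] univ(2,1) pq(2,1), of c]
      that(1-3)[THEN unary_idx_mem_idxs] that(4,5) l(2)
    unfolding preserves_unary_sum_def by auto
  show ?thesis unfolding partial_iso_def
  proof (rule conjI, simp add: l, intro ballI)
    fix I J K :: "nat + 'a option"
    assume "I \<in> idxs (length (map2 (decode w) ds ms))" "J \<in> idxs (length (map2 (decode w) ds ms))"
      "K \<in> idxs (length (map2 (decode w) ds ms))"
    then have IJK: "I \<in> idxs (length ms)" "J \<in> idxs (length ms)" "K \<in> idxs (length ms)"
      by (simp_all add: l)
    have "?vp I = ?vp J \<longleftrightarrow> ?vq I = ?vq J"
      using decode_eq_transfer[OF compat[OF IJK(1)] compat[OF IJK(2)]
          partial_iso_eq_iff[OF pi IJK(1,2)[THEN unary_idx_mem_idxs]]]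
      by (simp only: decP(1)[OF IJK(1)] decP(1)[OF IJK(2)] decQ(1)[OF IJK(1)] decQ(1)[OF IJK(2)])
    moreover have "concat_rel (?vp I) (?vp J) (?vp K) \<longleftrightarrow> concat_rel (?vq I) (?vq J) (?vq K)"
      using decode_concat_transfer[OF w compat[OF IJK(1)] compat[OF IJK(2)] compat[OF IJK(3)]
          sums[OF IJK]]
      by (simp only: decP(1)[OF IJK(1)] decP(1)[OF IJK(2)] decP(1)[OF IJK(3)]
          decQ(1)[OF IJK(1)] decQ(1)[OF IJK(2)] decQ(1)[OF IJK(3)])
    ultimately show "(?vp I = ?vp J \<longleftrightarrow> ?vq I = ?vq J) \<and>
        (concat_rel (?vp I) (?vp J) (?vp K) \<longleftrightarrow> concat_rel (?vq I) (?vq J) (?vq K))" ..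
  qed
qed

lemma univ_wpow_encode:
  assumes "w \<noteq> []" "x \<in> univ (wpow w p)"
  obtains d m where "x = decode w d m" "m \<in> univ (replicate p a)" "canonical_for w d m"
proof (cases x)
  case None
  then show ?thesis by (intro that[of "(0, 0)" None]) (simp_all add: decode_def canonical_for_def)
next
  case (Some u)
  then have "sublist u (wpow w p)" using assms(2) unfolding univ_def Facs_def by auto
  then obtain i g M where "canonical w i g M" "M \<le> p" "u = cyc_factor w i (code_len w i g M)"
    using sublist_wpow_canonical[OF assms(1)] by blast
  then show ?thesis using Some
    by (intro that[of "(i, g)" "Some (replicate M a)"])
      (auto simp: decode_def canonical_for_def mem_univ_replicate_iff)
qed

lemma decode_mem_univ_wpow:
  assumes "canonical_for w d m" "m \<in> univ (replicate q a)"
  shows "decode w d m \<in> univ (wpow w q)"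
proof (cases m)
  case (Some s)
  then obtain M where M: "m = Some (replicate M a)" "M \<le> q"
    using assms(2) unfolding mem_univ_replicate_iff by auto
  have "fst d + code_len w (fst d) (snd d) M \<le> M * length w"
    using assms(1) M(1) unfolding canonical_for_def canonical_def code_len_def by auto
  also have "\<dots> \<le> q * length w" using M(2) by simp
  finally have "sublist (cyc_factor w (fst d) (code_len w (fst d) (snd d) M)) (wpow w q)"
    by (rule sublist_wpow_cyc_factor)
  then show ?thesis using M(1) unfolding decode_def univ_def Facs_def by simp
qed (simp add: decode_def univ_def)

lemma partial_iso_canonical_for_snoc:
  assumes w: "w \<noteq> []" and pq: "1 \<le> p" "1 \<le> q"
    and pi: "partial_iso (replicate p a) (replicate q a) (ms @ [m]) (ms' @ [m'])"
    and m: "m \<in> univ (replicate p a)" "canonical_for w d m" and m': "m' \<in> univ (replicate q a)"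
  shows "canonical_for w d m'"
proof (cases m')
  case (Some s')
  let ?T = "Inl (length ms) :: nat + 'a option"
  have l: "length ms' = length ms" using partial_iso_length[OF pi] by simp
  have T: "?T \<in> idxs (length (ms @ [m]))" by simp
  have eT: "ext (replicate p a) (ms @ [m]) ?T = m" "ext (replicate q a) (ms' @ [m']) ?T = m'"
    using l by simp_all
  obtain M' where M': "m' = Some (replicate M' a)" using m' Some unfolding mem_univ_replicate_iff by auto
  then obtain M where M: "m = Some (replicate M a)"
    using m(1) partial_iso_None_iff[OF pi T] eT unfolding mem_univ_replicate_iff by auto
  have "min M 3 = min M' 3" using partial_iso_replicate_min3[OF pq pi T] eT M M' by simp
  moreover have "canonical w (fst d) (snd d) M" using m(2) M unfolding canonical_for_def by simp
  ultimately show ?thesis using canonical_min3[OF w] M' unfolding canonical_for_def by auto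
qed (simp add: canonical_for_def)

definition game_invariant :: "'a list \<Rightarrow> 'a \<Rightarrow> nat \<Rightarrow> nat \<Rightarrow> nat \<Rightarrow> (nat \<times> nat) list \<Rightarrow>
    'a list option list \<Rightarrow> 'a list option list \<Rightarrow> bool" where
  "game_invariant w a p q j ds ms ms' \<longleftrightarrow>
     dup_wins (j + 3) (replicate p a) (replicate q a) ms ms' \<and>
     set ms \<subseteq> univ (replicate p a) \<and> set ms' \<subseteq> univ (replicate q a) \<and>
     length ds = length ms \<and> length ms' = length ms \<and>
     (\<forall>i<length ms. canonical_for w (ds ! i) (ms ! i)) \<and> (\<forall>i<length ms. canonical_for w (ds ! i) (ms' ! i))"

lemma game_invariant_sym: "game_invariant w a p q j ds ms ms' \<Longrightarrow> game_invariant w a q p j ds ms' ms"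
  unfolding game_invariant_def using dup_wins_sym by fastforce

lemma game_invariant_forth:
  assumes w: "w \<noteq> []" and pq: "1 \<le> p" "1 \<le> q"
    and inv: "game_invariant w a p q (Suc j) ds ms ms'" and x: "x \<in> univ (wpow w p)"
    and IH: "\<And>ds ms ms'. game_invariant w a p q j ds ms ms' \<Longrightarrow>
      dup_wins j (wpow w p) (wpow w q) (map2 (decode w) ds ms) (map2 (decode w) ds ms')"
  shows "\<exists>y\<in>univ (wpow w q).
    dup_wins j (wpow w p) (wpow w q) (map2 (decode w) ds ms @ [x]) (map2 (decode w) ds ms' @ [y])"
proof -
  let ?P = "replicate p a" and ?Q = "replicate q a"
  obtain d m where dm: "x = decode w d m" "m \<in> univ ?P" "canonical_for w d m"
    using univ_wpow_encode[OF w x] by blast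
  have "dup_wins (Suc (j + 3)) ?P ?Q ms ms'" using inv unfolding game_invariant_def by simp
  then obtain m' where m': "m' \<in> univ ?Q" "dup_wins (j + 3) ?P ?Q (ms @ [m]) (ms' @ [m'])"
    using dm(2) unfolding dup_wins.simps(2) by blast
  have can': "canonical_for w d m'"
    using partial_iso_canonical_for_snoc[OF w pq dup_wins_partial_iso[OF m'(2)] dm(2,3) m'(1)] .
  have l: "length ds = length ms" "length ms' = length ms"
    using inv unfolding game_invariant_def by simp_all
  have "game_invariant w a p q j (ds @ [d]) (ms @ [m]) (ms' @ [m'])"
    using inv dm(2,3) m' can' unfolding game_invariant_def by (auto simp: nth_append less_Suc_eq)
  from IH[OF this] have "dup_wins j (wpow w p) (wpow w q)
      (map2 (decode w) ds ms @ [decode w d m]) (map2 (decode w) ds ms' @ [decode w d m'])"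
    using l by simp
  with dm(1) decode_mem_univ_wpow[OF can' m'(1)] show ?thesis by blast
qed

lemma game_invariant_dup_wins:
  assumes "w \<noteq> []" "1 \<le> p" "1 \<le> q" "game_invariant w a p q j ds ms ms'"
  shows "dup_wins j (wpow w p) (wpow w q) (map2 (decode w) ds ms) (map2 (decode w) ds ms')"
  using assms(2-)
proof (induction j arbitrary: p q ds ms ms')
  case 0
  then have "dup_wins 3 (replicate p a) (replicate q a) ms ms'"
    "set ms \<subseteq> univ (replicate p a)" "set ms' \<subseteq> univ (replicate q a)"
    "length ds = length ms" "length ms' = length ms"
    "\<forall>i<length ms. canonical_for w (ds ! i) (ms ! i)" "\<forall>i<length ms. canonical_for w (ds ! i) (ms' ! i)"
    unfolding game_invariant_def by simp_all
  then show ?case using decode_partial_iso[OF assms(1) "0.prems"(1,2)] by simp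
next
  case (Suc j)
  have "\<exists>y\<in>univ (wpow w q). dup_wins j (wpow w p) (wpow w q)
      (map2 (decode w) ds ms @ [x]) (map2 (decode w) ds ms' @ [y])" if "x \<in> univ (wpow w p)" for x
    using game_invariant_forth[OF assms(1) Suc.prems that Suc.IH[OF Suc.prems(1,2)]] .
  moreover have "\<exists>x\<in>univ (wpow w p). dup_wins j (wpow w p) (wpow w q)
      (map2 (decode w) ds ms @ [x]) (map2 (decode w) ds ms' @ [y])" if "y \<in> univ (wpow w q)" for y
    using game_invariant_forth[OF assms(1) Suc.prems(2,1) game_invariant_sym[OF Suc.prems(3)] that
        Suc.IH[OF Suc.prems(2,1)]]
    by (blast dest: dup_wins_sym)
  ultimately show ?case by simp
qed

theorem lemma4p8:
  fixes a :: "'a::finite" and p q k :: nat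
  assumes "p \<ge> 1" and "q \<ge> 1" and "k \<ge> 1"
    and "ef_equiv (k + 3) (replicate p a) (replicate q a)"
  shows "\<forall>w :: 'a list. primitive w \<longrightarrow> ef_equiv k (wpow w p) (wpow w q)"
proof (intro allI impI)
  fix w :: "'a list" assume "primitive w"
  then have w: "w \<noteq> []" by (simp add: primitive_def)
  have "game_invariant w a p q k [] [] []"
    using assms(4) unfolding game_invariant_def ef_equiv_def by simp
  from game_invariant_dup_wins[OF w assms(1,2) this]
  show "ef_equiv k (wpow w p) (wpow w q)" by (simp add: ef_equiv_def)
qed

end
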